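(* Let $X=(X_0,X_1,X_2)$ be a random element of $(\mathcal{X}_0\times\mathcal{X}_1\times\mathcal{X}_2,\mathfrak{X}_0\times\mathfrak{X}_1\times\mathfrak{X}_2)$ (countable alphabets carrying their power sets), and let $\mathcal{Y}_1,\mathcal{Y}_2$ be finite sets. Define, for $(x_0,x_1,x_2)$, \[ T_X^1(x_0,x_1,x_2)=[\mathrm{d}P_{X_0X_1X_1}:\mathrm{d}(P_{X_0X_1}P_{X_1\mid X_0})](x_0,x_1,x_1), \] \[ T_X^2(x_0,x_1,x_2)=[\mathrm{d}P_{X_0X_2X_2}:\mathrm{d}(P_{X_0X_2}P_{X_2\mid X_0})](x_0,x_2,x_2), \] \[ T_X^3(x_0,x_1,x_2)=[\mathrm{d}P_{X_0X_1X_2X_1X_2}:\mathrm{d}(P_{X_0X_1X_2}P_{X_1X_2\mid X_0})](x_0,x_1,x_2,x_1,x_2), \] and for $r>0$ let $A_r=I_{r|\mathcal{Y}_1|}\times I_{r|\mathcal{Y}_2|}\times I_{r|\mathcal{Y}_1||\mathcal{Y}_2|}\subseteq\mathbb{H}^3$, where $I_t=\{h\in\mathbb{H}:[t:1]<h<[1:0]\}$. (1) For every $r>1$ and $\epsilon>0$ there exists a pair $\varphi=(\varphi_1,\varphi_2)$ of measurable maps $\varphi_i:\mathcal{X}_i\to\mathcal{Y}_i$ such that \[ d(X\mid\varphi)\le P\{(T_X^i(X))_{i=1}^3\notin A_r\}+\tfrac{\sqrt3}{2}r^{-1/2}+\epsilon. \] (2) Conversely, every pair $\varphi=(\varphi_1,\varphi_2)$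 of measurable maps $\varphi_i:\mathcal{X}_i\to\mathcal{Y}_i$ satisfies, for all $0<r<1$, \[ d(X\mid\varphi)\ge P\{(T_X^i(X))_{i=1}^3\notin A_r\}-3r. \]
   Context: $d(X\mid\varphi)$ is the statistical distance $\sup_C|\mu(C)-\nu(C)|$ between the joint law $P_{X_0\varphi_1(X_1)\varphi_2(X_2)}$ and the product $P_{X_0}\times U_{\mathcal{Y}_1}\times U_{\mathcal{Y}_2}$, where $U_{\mathcal{Y}_i}$ is the uniform distribution on $\mathcal{Y}_i$. $P_{X_0X_1X_1}$ is the law of $(X_0,X_1,X_1)$ on $\mathcal{X}_0\times\mathcal{X}_1\times\mathcal{X}_1$, and $P_{X_0X_1}P_{X_1\mid X_0}$ is the measure on the same space given by $C\mapsto\int P_{X_1\mid X_0=x_0}(C_{(x_0,x_1)})\,P_{X_0X_1}(\mathrm{d}(x_0,x_1))$, with $P_{X_1\mid X_0}$ a (regular) conditional distribution of $X_1$ given $X_0$ (assumed to exist) and $C_{(x_0,x_1)}$ the section; the other two pairs of measures are defined analogously. The half projective line $\mathbb{H}$ is the set of rays $[r:s]=\{t(r,s):t>0\}$ for $(r,s)\in[0,\infty)^2\setminus\{(0,0)\}$, ordered by $[r_1:s_1]\le[r_2:s_2]$ iff $r_1s_2-r_2s_1\le0$ (equivalently $r_1/(r_1+s_1)\le r_2/(r_2+s_2)$), with the topology making $[r:s]\mapsto r/(r+s)$ a homeomorphism onto $[0,1]$. For finite measures $\alpha,\beta$, the likelihood ratio is $[\mathrm{d}\alpha:\mathrm{d}\beta]=[\mathrm{d}\alpha/\mathrm{d}(\alpha+\beta):\mathrm{d}\beta/\mathrm{d}(\alpha+\beta)]$,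 an $\mathbb{H}$-valued function defined $(\alpha+\beta)$-a.e. *)

theory Defs
  imports "HOL-Probability.Probability"
begin

text \<open>Half projective line H, represented through the homeomorphism
  [r:s] |-> r/(r+s) onto [0,1] (order preserving).\<close>
definition hray :: "real \<Rightarrow> real \<Rightarrow> real" where
  "hray r s = r / (r + s)"

text \<open>Likelihood ratio [d alpha : d beta] of two discrete (countable, power-set)
  finite measures, given as pmfs: the densities w.r.t. alpha+beta at a point z
  are the ratios of the point masses.\<close>
definition lratio :: "'a pmf \<Rightarrow> 'a pmf \<Rightarrow> 'a \<Rightarrow> real" where
  "lratio \<alpha> \<beta> z = hray (pmf \<alpha> z) (pmf \<beta> z)"

definition cond_law :: "('a \<times> 'u) pmf \<Rightarrow> 'a \<Rightarrow> 'u pmf" where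
  "cond_law q x0 = map_pmf snd (cond_pmf q {z. fst z = x0})"

definition dup_law :: "('a \<times> 'u) pmf \<Rightarrow> ('a \<times> 'u \<times> 'u) pmf" where
  "dup_law q = map_pmf (\<lambda>(x0, u). (x0, u, u)) q"

definition cond_prod_law :: "('a \<times> 'u) pmf \<Rightarrow> ('a \<times> 'u \<times> 'u) pmf" where
  "cond_prod_law q = bind_pmf q (\<lambda>(x0, u). map_pmf (\<lambda>u'. (x0, u, u')) (cond_law q x0))"

definition Tstat :: "('a \<times> 'u) pmf \<Rightarrow> 'a \<Rightarrow> 'u \<Rightarrow> real" where
  "Tstat q x0 u = lratio (dup_law q) (cond_prod_law q) (x0, u, u)"

definition TX1 :: "('a \<times> 'b \<times> 'c) pmf \<Rightarrow> 'a \<times> 'b \<times> 'c \<Rightarrow> real" where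
  "TX1 p x = Tstat (map_pmf (\<lambda>(x0, x1, x2). (x0, x1)) p) (fst x) (fst (snd x))"

definition TX2 :: "('a \<times> 'b \<times> 'c) pmf \<Rightarrow> 'a \<times> 'b \<times> 'c \<Rightarrow> real" where
  "TX2 p x = Tstat (map_pmf (\<lambda>(x0, x1, x2). (x0, x2)) p) (fst x) (snd (snd x))"

definition TX3 :: "('a \<times> 'b \<times> 'c) pmf \<Rightarrow> 'a \<times> 'b \<times> 'c \<Rightarrow> real" where
  "TX3 p x = Tstat p (fst x) (snd x)"

definition Iint :: "real \<Rightarrow> real set" where
  "Iint t = {h. hray t 1 < h \<and> h < hray 1 0}"

definition Aset :: "nat \<Rightarrow> nat \<Rightarrow> real \<Rightarrow> (real \<times> real \<times> real) set" where
  "Aset n1 n2 r = Iint (r * n1) \<times> Iint (r * n2) \<times> Iint (r * n1 * n2)"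

definition stat_dist :: "'a pmf \<Rightarrow> 'a pmf \<Rightarrow> real" where
  "stat_dist \<mu> \<nu> = (SUP C. \<bar>measure_pmf.prob \<mu> C - measure_pmf.prob \<nu> C\<bar>)"

definition dXphi :: "('a \<times> 'b \<times> 'c) pmf \<Rightarrow> ('b \<Rightarrow> 'y1::finite) \<Rightarrow> ('c \<Rightarrow> 'y2::finite) \<Rightarrow> real" where
  "dXphi p \<phi>1 \<phi>2 = stat_dist
     (map_pmf (\<lambda>(x0, x1, x2). (x0, \<phi>1 x1, \<phi>2 x2)) p)
     (pair_pmf (map_pmf fst p) (pair_pmf (pmf_of_set UNIV) (pmf_of_set UNIV)))"

end

theory Submission
  imports Defs
begin

text \<open>The statistic T is the ray [1 : P(U = u | X0 = x0)], so A_r is the event that, given X0,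
  the atoms hit by X1, X2 and (X1, X2) are light: of conditional probability below 1/(r|Y1|),
  1/(r|Y2|) and 1/(r|Y1||Y2|).

  Converse: off A_r some coordinate hits one of at most r|Y| heavy atoms of its conditional law;
  their images under \<phi> form a set that has probability at least P(not A_r) under the true law but
  uniform mass at most 3r in every section.

  Direct part: restrict to finitely many light atoms and bin them by uniformly random maps. The
  expected squared deviation of the binned conditional masses from uniform is a sum of collision
  probabilities, which lightness bounds by 3/r; Cauchy-Schwarz turns this into an average L1
  deviation of at most sqrt(3/r), and some fixed pair of maps does no worse than the average.\<close>

lemma sum_pmf_le_pmf_map:
  assumes "finite S" "\<And>z. z \<in> S \<Longrightarrow> \<pi> z = w"
  shows "(\<Sum>z\<in>S. pmf p z) \<le> pmf (map_pmf \<pi> p) w"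
proof -
  have "(\<Sum>z\<in>S. pmf p z) = measure p S" using assms by (simp add: measure_measure_pmf_finite)
  also have "\<dots> \<le> measure p (\<pi> -` {w})" by (rule measure_pmf.finite_measure_mono) (use assms in auto)
  finally show ?thesis by (simp add: pmf_map)
qed

lemma sum_pmf_Pair_le_pmf_map:
  assumes "finite S" "\<And>w. w \<in> S \<Longrightarrow> \<pi> (x0, w) = v"
  shows "(\<Sum>w\<in>S. pmf p (x0, w)) \<le> pmf (map_pmf \<pi> p) v"
proof -
  have "(\<Sum>w\<in>S. pmf p (x0, w)) = (\<Sum>z\<in>Pair x0 ` S. pmf p z)"
    by (simp add: sum.reindex inj_on_def)
  also have "\<dots> \<le> pmf (map_pmf \<pi> p) v"
    by (rule sum_pmf_le_pmf_map) (use assms in auto)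
  finally show ?thesis .
qed

lemma pmf_le_pmf_map_fst: "pmf q (x0, u) \<le> pmf (map_pmf fst q) x0"
  using sum_pmf_le_pmf_map[of "{(x0, u)}" fst x0 q] by simp

lemma pmf_cond_law:
  assumes "(x0, u) \<in> set_pmf q"
  shows "pmf (cond_law q x0) u = pmf q (x0, u) / pmf (map_pmf fst q) x0"
proof -
  let ?S = "{z. fst z = x0}"
  have ne: "set_pmf q \<inter> ?S \<noteq> {}" using assms by auto
  have "pmf (cond_law q x0) u = pmf (map_pmf snd (cond_pmf q ?S)) (snd (x0, u))"
    by (simp add: cond_law_def)
  also have "\<dots> = pmf (cond_pmf q ?S) (x0, u)"
    by (rule pmf_map_inj) (use ne assms in \<open>auto simp: inj_on_def\<close>)
  also have "\<dots> = pmf q (x0, u) / measure q ?S" using pmf_cond[OF ne] by simp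
  also have "measure q ?S = pmf (map_pmf fst q) x0" by (simp add: pmf_map vimage_def)
  finally show ?thesis .
qed

lemma pmf_dup_law_diag: "pmf (dup_law q) (x0, u, u) = pmf q (x0, u)"
proof -
  have "inj (\<lambda>(x0, u). (x0, u, u))" by (auto simp: inj_on_def)
  from pmf_map_inj'[OF this, of q "(x0, u)"] show ?thesis by (simp add: dup_law_def)
qed

lemma pmf_cond_prod_law_diag:
  "pmf (cond_prod_law q) (x0, u, u) = pmf q (x0, u) * pmf (cond_law q x0) u"
proof -
  have "pmf (case z of (x0', u') \<Rightarrow> map_pmf (\<lambda>u''. (x0', u', u'')) (cond_law q x0')) (x0, u, u)
      = pmf (cond_law q x0) u * indicator {(x0, u)} z" for z
  proof (cases "z = (x0, u)")
    case True
    have "inj (\<lambda>u''. (x0, u, u''))" by (auto simp: inj_on_def)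
    from pmf_map_inj'[OF this] True show ?thesis by simp
  next
    case False
    then show ?thesis by (cases z) (auto simp: pmf_eq_0_set_pmf)
  qed
  then show ?thesis
    unfolding cond_prod_law_def pmf_bind by (simp add: measure_pmf_single mult.commute)
qed

lemma Tstat_eq_hray_cond_law:
  assumes "(x0, u) \<in> set_pmf q"
  shows "Tstat q x0 u = hray 1 (pmf (cond_law q x0) u)"
proof -
  define a where "a = pmf q (x0, u)"
  define c where "c = pmf (cond_law q x0) u"
  have "a > 0" using assms by (simp add: a_def pmf_positive)
  then have "a / (a + a * c) = 1 / (1 + c)"
    by (metis mult.right_neutral distrib_left nonzero_divide_mult_cancel_left less_irrefl)
  then show ?thesis
    unfolding Tstat_def lratio_def pmf_dup_law_diag pmf_cond_prod_law_diag hray_def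
      a_def[symmetric] c_def[symmetric] by simp
qed

lemma hray_in_Iint_iff:
  assumes "t \<ge> 0" "c > 0"
  shows "hray 1 c \<in> Iint t \<longleftrightarrow> t * c < 1"
  using assms by (simp add: Iint_def hray_def divide_simps) (simp add: algebra_simps)

lemma Tstat_in_Iint_iff:
  assumes "(x0, u) \<in> set_pmf q" "t \<ge> 0"
  shows "Tstat q x0 u \<in> Iint t \<longleftrightarrow> t * pmf q (x0, u) < pmf (map_pmf fst q) x0"
proof -
  have a: "pmf q (x0, u) > 0" using assms by (simp add: pmf_positive)
  then have Q: "pmf (map_pmf fst q) x0 > 0" using pmf_le_pmf_map_fst[of q x0 u] by linarith
  show ?thesis
    using assms a Q
    by (simp add: Tstat_eq_hray_cond_law pmf_cond_law hray_in_Iint_iff divide_simps mult.assoc)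
qed

definition law01 :: "('a \<times> 'b \<times> 'c) pmf \<Rightarrow> ('a \<times> 'b) pmf" where
  "law01 p = map_pmf (\<lambda>(x0, x1, x2). (x0, x1)) p"

definition law02 :: "('a \<times> 'b \<times> 'c) pmf \<Rightarrow> ('a \<times> 'c) pmf" where
  "law02 p = map_pmf (\<lambda>(x0, x1, x2). (x0, x2)) p"

lemma map_pmf_fst_law01 [simp]: "map_pmf fst (law01 p) = map_pmf fst p"
  by (simp add: law01_def pmf.map_comp o_def case_prod_beta)

lemma map_pmf_fst_law02 [simp]: "map_pmf fst (law02 p) = map_pmf fst p"
  by (simp add: law02_def pmf.map_comp o_def case_prod_beta)

lemma TX_in_Aset_iff:
  assumes x: "(x0, x1, x2) \<in> set_pmf p" and r: "r > 0"
  shows "(TX1 p (x0, x1, x2), TX2 p (x0, x1, x2), TX3 p (x0, x1, x2)) \<in> Aset n1 n2 r \<longleftrightarrow>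
     r * n1 * pmf (law01 p) (x0, x1) < pmf (map_pmf fst p) x0 \<and>
     r * n2 * pmf (law02 p) (x0, x2) < pmf (map_pmf fst p) x0 \<and>
     r * n1 * n2 * pmf p (x0, x1, x2) < pmf (map_pmf fst p) x0"
proof -
  have "(x0, x1) \<in> set_pmf (law01 p)" "(x0, x2) \<in> set_pmf (law02 p)"
    using x unfolding law01_def law02_def by force+
  then show ?thesis
    using Tstat_in_Iint_iff[of x0 x1 "law01 p" "r * n1"] Tstat_in_Iint_iff[of x0 x2 "law02 p" "r * n2"]
      Tstat_in_Iint_iff[OF x, of "r * n1 * n2"] r
    by (simp add: Aset_def TX1_def TX2_def TX3_def law01_def[symmetric] law02_def[symmetric])
qed

lemma prob_diff_le_stat_dist: "measure_pmf.prob \<mu> C - measure_pmf.prob \<nu> C \<le> stat_dist \<mu> \<nu>"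
proof -
  have "\<bar>measure_pmf.prob \<mu> C' - measure_pmf.prob \<nu> C'\<bar> \<le> 1" for C'
    using measure_pmf.prob_le_1[of \<mu> C'] measure_pmf.prob_le_1[of \<nu> C']
      measure_nonneg[of \<mu> C'] measure_nonneg[of \<nu> C'] by linarith
  then have "bdd_above (range (\<lambda>C. \<bar>measure_pmf.prob \<mu> C - measure_pmf.prob \<nu> C\<bar>))"
    by (intro bdd_aboveI2)
  then have "\<bar>measure_pmf.prob \<mu> C - measure_pmf.prob \<nu> C\<bar> \<le> stat_dist \<mu> \<nu>"
    unfolding stat_dist_def by (rule cSUP_upper[OF UNIV_I])
  then show ?thesis by simp
qed

text \<open>Complements turn a one-sided bound into a two-sided one.\<close>
lemma stat_dist_le:
  assumes "\<And>C. measure_pmf.prob \<mu> C - measure_pmf.prob \<nu> C \<le> B"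
  shows "stat_dist \<mu> \<nu> \<le> B"
  unfolding stat_dist_def
proof (rule cSUP_least)
  fix C
  have "measure_pmf.prob \<mu> (- C) = 1 - measure_pmf.prob \<mu> C"
    "measure_pmf.prob \<nu> (- C) = 1 - measure_pmf.prob \<nu> C"
    using measure_pmf.prob_compl[of C \<mu>] measure_pmf.prob_compl[of C \<nu>]
    by (auto simp: Compl_eq_Diff_UNIV)
  with assms[of C] assms[of "- C"]
  show "\<bar>measure_pmf.prob \<mu> C - measure_pmf.prob \<nu> C\<bar> \<le> B" by (auto simp: abs_if)
qed auto

lemma pair_pmf_of_set_UNIV:
  "pair_pmf (pmf_of_set (UNIV :: 'y1::finite set)) (pmf_of_set (UNIV :: 'y2::finite set)) = pmf_of_set UNIV"
  by (rule pmf_eqI) (auto simp: pmf_pair card_cartesian_product)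

lemma measure_pair_pmf_le_sections:
  fixes \<mu> :: "'a pmf" and \<nu> :: "'b pmf"
  assumes "\<And>a. measure \<nu> (Pair a -` C) \<le> b"
  shows "measure (pair_pmf \<mu> \<nu>) C \<le> b"
proof -
  have "emeasure (pair_pmf \<mu> \<nu>) C = (\<integral>\<^sup>+ a. \<integral>\<^sup>+ b. indicator C (a, b) \<partial>\<nu> \<partial>\<mu>)"
    by (simp add: nn_integral_pair_pmf' flip: nn_integral_indicator)
  also have "\<dots> = (\<integral>\<^sup>+ a. emeasure \<nu> (Pair a -` C) \<partial>\<mu>)"
    by (intro nn_integral_cong) (simp add: nn_integral_indicator[symmetric] indicator_def)
  also have "\<dots> \<le> (\<integral>\<^sup>+ a. ennreal b \<partial>\<mu>)"
    by (intro nn_integral_mono) (simp add: assms measure_pmf.emeasure_eq_measure ennreal_leI)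
  also have "\<dots> = ennreal b" by simp
  finally have "emeasure (pair_pmf \<mu> \<nu>) C \<le> ennreal b" .
  moreover have "b \<ge> 0" using assms[of undefined] measure_nonneg order_trans by blast
  ultimately show ?thesis by (simp add: measure_pmf.emeasure_eq_measure)
qed

lemma finite_card_heavy_atoms:
  fixes t :: real and q :: "('a \<times> 'u) pmf" and x :: 'a
  assumes t: "t > 0"
  defines "B \<equiv> {u. (x, u) \<in> set_pmf q \<and> pmf (map_pmf fst q) x \<le> t * pmf q (x, u)}"
  shows "finite B \<and> real (card B) \<le> t"
proof -
  define Q where "Q = pmf (map_pmf fst q) x"
  have card_le: "real (card S) \<le> t" if S: "finite S" "S \<subseteq> B" for S
  proof (cases "S = {}")
    case True then show ?thesis using t by simp
  next
    case False
    then obtain u where "u \<in> S" by auto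
    then have "Q > 0"
      using S pmf_le_pmf_map_fst[of q x u] pmf_positive[of "(x, u)" q] by (auto simp: B_def Q_def)
    have "(\<Sum>u\<in>S. Q / t) \<le> (\<Sum>u\<in>S. pmf q (x, u))"
      by (rule sum_mono) (use S t in \<open>auto simp: B_def Q_def field_simps\<close>)
    also have "\<dots> \<le> Q" unfolding Q_def by (rule sum_pmf_Pair_le_pmf_map) (use S in auto)
    finally have "card S * (Q / t) \<le> Q" by simp
    then show ?thesis using \<open>Q > 0\<close> t by (simp add: field_simps)
  qed
  have "finite B"
  proof (rule ccontr)
    assume "infinite B"
    then obtain S where "S \<subseteq> B" "finite S" "card S = nat (ceiling t) + 1"
      using infinite_arbitrarily_large by blast
    with card_le[of S] show False by linarith
  qed
  with card_le[of B] show ?thesis by simp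
qed

lemma measure_uniform_section_union_le:
  fixes S1 :: "'u::finite set" and S2 :: "'v::finite set" and t :: real
  assumes "real (card S1) \<le> t * CARD('u)" "real (card S2) \<le> t * CARD('v)"
    "real (card S3) \<le> t * CARD('u) * CARD('v)"
  shows "measure (pmf_of_set UNIV) {(y1, y2). y1 \<in> S1 \<or> y2 \<in> S2 \<or> (y1, y2) \<in> S3} \<le> 3 * t"
proof -
  have "{(y1, y2). y1 \<in> S1 \<or> y2 \<in> S2 \<or> (y1, y2) \<in> S3} \<subseteq> (S1 \<times> UNIV \<union> UNIV \<times> S2) \<union> S3"
    by auto
  then have "card {(y1, y2). y1 \<in> S1 \<or> y2 \<in> S2 \<or> (y1, y2) \<in> S3}
      \<le> card ((S1 \<times> UNIV \<union> UNIV \<times> S2) \<union> S3)"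
    by (intro card_mono) auto
  also have "\<dots> \<le> card (S1 \<times> (UNIV :: 'v set)) + card ((UNIV :: 'u set) \<times> S2) + card S3"
    by (meson add_le_mono card_Un_le le_refl order_trans)
  finally have "real (card {(y1, y2). y1 \<in> S1 \<or> y2 \<in> S2 \<or> (y1, y2) \<in> S3})
      \<le> real (card S1) * CARD('v) + CARD('u) * real (card S2) + real (card S3)"
    unfolding of_nat_mult[symmetric] of_nat_add[symmetric] of_nat_le_iff by (simp add: card_cartesian_product)
  also have "\<dots> \<le> t * CARD('u) * CARD('v) + CARD('u) * (t * CARD('v)) + t * CARD('u) * CARD('v)"
    using assms by (intro add_mono mult_right_mono mult_left_mono) auto
  finally show ?thesis by (simp add: measure_pmf_of_set card_cartesian_product field_simps)
qed

lemma dXphi_ge_prob_not_in_Aset: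
  fixes p :: "('a \<times> 'b \<times> 'c) pmf" and \<phi>1 :: "'b \<Rightarrow> 'y1::finite" and \<phi>2 :: "'c \<Rightarrow> 'y2::finite"
  assumes r: "r > 0"
  shows "measure_pmf.prob p {x. (TX1 p x, TX2 p x, TX3 p x) \<notin> Aset CARD('y1) CARD('y2) r} - 3 * r
    \<le> dXphi p \<phi>1 \<phi>2"
proof -
  define n1 where "n1 = CARD('y1)"
  define n2 where "n2 = CARD('y2)"
  define Q where "Q = pmf (map_pmf fst p)"
  define H1 where "H1 x0 = {u. (x0, u) \<in> set_pmf (law01 p) \<and> Q x0 \<le> r * n1 * pmf (law01 p) (x0, u)}" for x0
  define H2 where "H2 x0 = {u. (x0, u) \<in> set_pmf (law02 p) \<and> Q x0 \<le> r * n2 * pmf (law02 p) (x0, u)}" for x0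
  define H3 where "H3 x0 = {u. (x0, u) \<in> set_pmf p \<and> Q x0 \<le> r * n1 * n2 * pmf p (x0, u)}" for x0
  define C :: "('a \<times> 'y1 \<times> 'y2) set" where
    "C = {(x0, y1, y2). y1 \<in> \<phi>1 ` H1 x0 \<or> y2 \<in> \<phi>2 ` H2 x0 \<or> (y1, y2) \<in> map_prod \<phi>1 \<phi>2 ` H3 x0}"
  define f :: "'a \<times> 'b \<times> 'c \<Rightarrow> 'a \<times> 'y1 \<times> 'y2" where "f = (\<lambda>(x0, x1, x2). (x0, \<phi>1 x1, \<phi>2 x2))"
  define A where "A = {x. (TX1 p x, TX2 p x, TX3 p x) \<notin> Aset n1 n2 r}"
  have H: "finite (H1 x0) \<and> card (H1 x0) \<le> r * n1" "finite (H2 x0) \<and> card (H2 x0) \<le> r * n2"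
    "finite (H3 x0) \<and> card (H3 x0) \<le> r * n1 * n2" for x0
    using finite_card_heavy_atoms[where t = "r * n1" and q = "law01 p" and x = x0]
      finite_card_heavy_atoms[where t = "r * n2" and q = "law02 p" and x = x0]
      finite_card_heavy_atoms[where t = "r * n1 * n2" and q = p and x = x0] r
    by (simp_all add: H1_def H2_def H3_def Q_def n1_def n2_def)
  have "A \<inter> set_pmf p \<subseteq> f -` C"
  proof safe
    fix x0 x1 x2 assume x: "(x0, x1, x2) \<in> A" "(x0, x1, x2) \<in> set_pmf p"
    have "(x0, x1) \<in> set_pmf (law01 p)" "(x0, x2) \<in> set_pmf (law02 p)"
      using x unfolding law01_def law02_def by force+
    with x TX_in_Aset_iff[OF x(2) r, of n1 n2]
    have "x1 \<in> H1 x0 \<or> x2 \<in> H2 x0 \<or> (x1, x2) \<in> H3 x0"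
      by (auto simp: A_def H1_def H2_def H3_def Q_def mult.assoc)
    then show "(x0, x1, x2) \<in> f -` C" by (force simp: C_def f_def)
  qed
  then have "measure p A \<le> measure p (f -` C)"
    by (intro measure_pmf.finite_measure_mono_AE) (auto simp: AE_measure_pmf_iff)
  moreover have "measure (pmf_of_set (UNIV :: ('y1 \<times> 'y2) set)) (Pair x0 -` C) \<le> 3 * r" for x0
  proof -
    have "Pair x0 -` C
        = {(y1, y2). y1 \<in> \<phi>1 ` H1 x0 \<or> y2 \<in> \<phi>2 ` H2 x0 \<or> (y1, y2) \<in> map_prod \<phi>1 \<phi>2 ` H3 x0}"
      by (auto simp: C_def)
    moreover have "real (card (\<phi>1 ` H1 x0)) \<le> r * n1" "real (card (\<phi>2 ` H2 x0)) \<le> r * n2"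
      "real (card (map_prod \<phi>1 \<phi>2 ` H3 x0)) \<le> r * n1 * n2"
      using H[of x0] card_image_le[of "H1 x0" \<phi>1] card_image_le[of "H2 x0" \<phi>2]
        card_image_le[of "H3 x0" "map_prod \<phi>1 \<phi>2"] by (auto dest: order_trans[OF of_nat_mono])
    ultimately show ?thesis
      unfolding n1_def n2_def by (simp add: measure_uniform_section_union_le)
  qed
  then have "measure (pair_pmf (map_pmf fst p) (pmf_of_set UNIV)) C \<le> 3 * r"
    by (rule measure_pair_pmf_le_sections)
  ultimately have "measure p A - 3 * r
      \<le> measure (map_pmf f p) C - measure (pair_pmf (map_pmf fst p) (pmf_of_set UNIV)) C"
    by simp
  also have "\<dots> \<le> dXphi p \<phi>1 \<phi>2"
    unfolding dXphi_def f_def pair_pmf_of_set_UNIV by (rule prob_diff_le_stat_dist)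
  finally show ?thesis unfolding A_def n1_def n2_def .
qed

definition image_mass :: "('x \<Rightarrow> 'y) \<Rightarrow> 'x set \<Rightarrow> ('x \<Rightarrow> real) \<Rightarrow> 'y \<Rightarrow> real" where
  "image_mass \<psi> D g y = (\<Sum>z\<in>D. if \<psi> z = y then g z else 0)"

lemma sum_image_mass: "(\<Sum>y\<in>UNIV. image_mass \<psi> D g (y :: 'y::finite)) = sum g D"
  unfolding image_mass_def by (subst sum.swap) simp

lemma sum_image_mass_squared:
  "(\<Sum>y\<in>UNIV. (image_mass \<psi> D g (y :: 'y::finite))\<^sup>2)
    = (\<Sum>z\<in>D. \<Sum>z'\<in>D. g z * g z' * of_bool (\<psi> z = \<psi> z'))"
proof -
  have "(\<Sum>y\<in>UNIV. (image_mass \<psi> D g y)\<^sup>2)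
      = (\<Sum>y\<in>UNIV. \<Sum>z\<in>D. \<Sum>z'\<in>D. (if \<psi> z = y then g z else 0) * (if \<psi> z' = y then g z' else 0))"
    unfolding image_mass_def power2_eq_square sum_product ..
  also have "\<dots> = (\<Sum>z\<in>D. \<Sum>z'\<in>D. \<Sum>y\<in>UNIV. (if \<psi> z = y then g z else 0) * (if \<psi> z' = y then g z' else 0))"
    by (subst sum.swap) (rule sum.cong[OF refl], rule sum.swap)
  also have "\<dots> = (\<Sum>z\<in>D. \<Sum>z'\<in>D. g z * g z' * of_bool (\<psi> z = \<psi> z'))"
  proof (intro sum.cong refl)
    fix z z'
    have "(\<lambda>y. (if \<psi> z = y then g z else 0) * (if \<psi> z' = y then g z' else 0))
        = (\<lambda>y. if y = \<psi> z then g z * g z' * of_bool (\<psi> z = \<psi> z') else 0)"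
      by (auto simp: fun_eq_iff)
    then show "(\<Sum>y\<in>UNIV. (if \<psi> z = y then g z else 0) * (if \<psi> z' = y then g z' else 0))
        = g z * g z' * of_bool (\<psi> z = \<psi> z')"
      by (simp only: sum.delta) auto
  qed
  finally show ?thesis .
qed

lemma card_PiE_UNIV_collision:
  assumes "finite D" "a \<in> D" "b \<in> D" "a \<noteq> b"
  shows "card {f \<in> PiE D (\<lambda>_. UNIV :: 'y::finite set). f a = f b} * CARD('y)
    = card (PiE D (\<lambda>_. UNIV :: 'y set))"
proof -
  let ?P = "PiE D (\<lambda>_. UNIV :: 'y set)"
  let ?E = "{f \<in> ?P. f a = f b}"
  have "bij_betw (\<lambda>(f, y). f(a := y)) (?E \<times> UNIV) ?P"
  proof (rule bij_betw_byWitness[where f' = "\<lambda>g. (g(a := g b), g a)"])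
    show "\<forall>z\<in>?E \<times> UNIV. (\<lambda>g. (g(a := g b), g a)) ((\<lambda>(f, y). f(a := y)) z) = z"
      using assms by (auto simp: fun_eq_iff)
    show "(\<lambda>(f, y). f(a := y)) ` (?E \<times> UNIV) \<subseteq> ?P"
      "(\<lambda>g. (g(a := g b), g a)) ` ?P \<subseteq> ?E \<times> UNIV"
      using assms by (auto simp: PiE_iff extensional_def)
  qed auto
  then have "card (?E \<times> (UNIV :: 'y set)) = card ?P" by (rule bij_betw_same_card)
  then show ?thesis by (simp add: card_cartesian_product)
qed

lemma sum_PiE_UNIV_collision:
  assumes "finite D" "a \<in> D" "b \<in> D"
  shows "(\<Sum>f\<in>PiE D (\<lambda>_. UNIV :: 'y::finite set). of_bool (f a = f b))
    = real (card (PiE D (\<lambda>_. UNIV :: 'y set))) * (if a = b then 1 else 1 / CARD('y))"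
proof (cases "a = b")
  case False
  have "(\<Sum>f\<in>PiE D (\<lambda>_. UNIV :: 'y set). of_bool (f a = f b))
      = real (card {f \<in> PiE D (\<lambda>_. UNIV :: 'y set). f a = f b})"
    using assms by (simp add: finite_PiE Int_def conj_commute)
  also have "\<dots> = card (PiE D (\<lambda>_. UNIV :: 'y set)) / CARD('y)"
    using card_PiE_UNIV_collision[OF assms False, where 'y='y]
    by (simp add: field_simps flip: of_nat_mult)
  finally show ?thesis using False by simp
qed simp

text \<open>Summing over binnings Fb Fc is taking expectations over a uniformly random pair of maps, up to
  the factor card (binnings Fb Fc); values outside the finite supports Fb and Fc play no role.\<close>
definition binnings :: "'b set \<Rightarrow> 'c set \<Rightarrow> (('b \<Rightarrow> 'u) \<times> ('c \<Rightarrow> 'v)) set" where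
  "binnings Fb Fc = PiE Fb (\<lambda>_. UNIV) \<times> PiE Fc (\<lambda>_. UNIV)"

definition collision_prob :: "real \<Rightarrow> real \<Rightarrow> 'b \<times> 'c \<Rightarrow> 'b \<times> 'c \<Rightarrow> real" where
  "collision_prob n1 n2 z z' = (if fst z = fst z' then 1 else 1 / n1) * (if snd z = snd z' then 1 else 1 / n2)"

lemma finite_binnings:
  "finite Fb \<Longrightarrow> finite Fc \<Longrightarrow> finite (binnings Fb Fc :: (('b \<Rightarrow> 'u::finite) \<times> ('c \<Rightarrow> 'v::finite)) set)"
  by (simp add: binnings_def finite_PiE)

lemma binnings_nonempty: "binnings Fb Fc \<noteq> {}"
  by (simp add: binnings_def PiE_eq_empty_iff)

lemma sum_binnings_collision:
  assumes "finite Fb" "finite Fc" "z \<in> Fb \<times> Fc" "z' \<in> Fb \<times> Fc"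
  shows "(\<Sum>\<phi>\<in>(binnings Fb Fc :: (('b \<Rightarrow> 'u::finite) \<times> ('c \<Rightarrow> 'v::finite)) set).
            of_bool (map_prod (fst \<phi>) (snd \<phi>) z = map_prod (fst \<phi>) (snd \<phi>) z'))
    = card (binnings Fb Fc :: (('b \<Rightarrow> 'u) \<times> ('c \<Rightarrow> 'v)) set) * collision_prob CARD('u) CARD('v) z z'"
proof -
  have "(\<Sum>\<phi>\<in>(binnings Fb Fc :: (('b \<Rightarrow> 'u) \<times> ('c \<Rightarrow> 'v)) set).
            of_bool (map_prod (fst \<phi>) (snd \<phi>) z = map_prod (fst \<phi>) (snd \<phi>) z'))
      = (\<Sum>f1\<in>PiE Fb (\<lambda>_. UNIV :: 'u set). of_bool (f1 (fst z) = f1 (fst z'))) *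
        (\<Sum>f2\<in>PiE Fc (\<lambda>_. UNIV :: 'v set). of_bool (f2 (snd z) = f2 (snd z')) :: real)"
    by (simp add: binnings_def sum.cartesian_product sum_product map_prod_def split_beta of_bool_conj)
  also have "\<dots> = card (binnings Fb Fc :: (('b \<Rightarrow> 'u) \<times> ('c \<Rightarrow> 'v)) set) * collision_prob CARD('u) CARD('v) z z'"
    using assms
    by (simp add: sum_PiE_UNIV_collision binnings_def collision_prob_def card_cartesian_product mem_Times_iff)
  finally show ?thesis .
qed

text \<open>Two distinct atoms collide with probability at most 1/n2 if they share the first
  coordinate, 1/n1 if they share the second, and 1/(n1 n2) otherwise.\<close>
lemma sum_collision_prob_le:
  fixes D :: "('b \<times> 'c) set" and n1 n2 r Q :: real
  assumes D: "finite D" "z \<in> D" and g: "\<And>z'. z' \<in> D \<Longrightarrow> g z' \<ge> 0"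
    and n: "n1 \<ge> 1" "n2 \<ge> 1"
    and atom: "g z \<le> Q / (r * (n1 * n2))"
    and fibre1: "sum g {z' \<in> D. fst z' = fst z} \<le> Q / (r * n1)"
    and fibre2: "sum g {z' \<in> D. snd z' = snd z} \<le> Q / (r * n2)"
  shows "(\<Sum>z'\<in>D. g z' * collision_prob n1 n2 z z') \<le> 3 * Q / (r * (n1 * n2)) + sum g D / (n1 * n2)"
proof -
  have "collision_prob n1 n2 z z' \<le> of_bool (z' = z) + of_bool (fst z' = fst z) / n2
      + of_bool (snd z' = snd z) / n1 + 1 / (n1 * n2)" for z'
    using n by (cases z, cases z') (auto simp: collision_prob_def field_simps)
  then have "(\<Sum>z'\<in>D. g z' * collision_prob n1 n2 z z')
      \<le> (\<Sum>z'\<in>D. g z' * (of_bool (z' = z) + of_bool (fst z' = fst z) / n2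
            + of_bool (snd z' = snd z) / n1 + 1 / (n1 * n2)))"
    by (intro sum_mono mult_left_mono g)
  also have "\<dots> = (\<Sum>z'\<in>D. of_bool (z' = z) * g z') + (\<Sum>z'\<in>D. of_bool (fst z' = fst z) * g z') / n2
      + (\<Sum>z'\<in>D. of_bool (snd z' = snd z) * g z') / n1 + sum g D / (n1 * n2)"
    by (simp add: distrib_left sum.distrib sum_divide_distrib mult.commute)
  also have "\<dots> = g z + sum g {z' \<in> D. fst z' = fst z} / n2 + sum g {z' \<in> D. snd z' = snd z} / n1
      + sum g D / (n1 * n2)"
  proof -
    have "{z' \<in> D. z' = z} = {z}" using D by auto
    then show ?thesis using D by (simp add: Int_def conj_commute)
  qed
  also have "\<dots> \<le> Q / (r * (n1 * n2)) + Q / (r * n1) / n2 + Q / (r * n2) / n1 + sum g D / (n1 * n2)"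
    using atom fibre1 fibre2 n by (intro add_mono divide_right_mono) auto
  also have "\<dots> = 3 * Q / (r * (n1 * n2)) + sum g D / (n1 * n2)"
    by (simp add: field_simps)
  finally show ?thesis .
qed

lemma sum_binnings_image_mass_squared:
  fixes Fb :: "'b set" and Fc :: "'c set" and D :: "('b \<times> 'c) set"
  defines "\<Phi> \<equiv> binnings Fb Fc :: (('b \<Rightarrow> 'u::finite) \<times> ('c \<Rightarrow> 'v::finite)) set"
  assumes fin: "finite Fb" "finite Fc" and D: "D \<subseteq> Fb \<times> Fc"
  shows "(\<Sum>\<phi>\<in>\<Phi>. \<Sum>y\<in>UNIV. (image_mass (map_prod (fst \<phi>) (snd \<phi>)) D g y)\<^sup>2)
    = card \<Phi> * (\<Sum>z\<in>D. g z * (\<Sum>z'\<in>D. g z' * collision_prob CARD('u) CARD('v) z z'))"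
proof -
  have "(\<Sum>\<phi>\<in>\<Phi>. \<Sum>y\<in>UNIV. (image_mass (map_prod (fst \<phi>) (snd \<phi>)) D g y)\<^sup>2)
      = (\<Sum>z\<in>D. \<Sum>z'\<in>D. \<Sum>\<phi>\<in>\<Phi>.
          g z * g z' * of_bool (map_prod (fst \<phi>) (snd \<phi>) z = map_prod (fst \<phi>) (snd \<phi>) z'))"
    unfolding sum_image_mass_squared by (subst sum.swap) (rule sum.cong[OF refl], rule sum.swap)
  also have "\<dots> = (\<Sum>z\<in>D. \<Sum>z'\<in>D. g z * g z' * (card \<Phi> * collision_prob CARD('u) CARD('v) z z'))"
    using D fin unfolding \<Phi>_def
    by (intro sum.cong refl) (simp add: subsetD sum_binnings_collision flip: sum_distrib_left)
  finally show ?thesis by (simp add: sum_distrib_left mult_ac)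
qed

lemma sum_square_diff_const:
  fixes f :: "'y::finite \<Rightarrow> real" and c :: real
  shows "(\<Sum>y\<in>UNIV. (f y - c)\<^sup>2) = (\<Sum>y\<in>UNIV. (f y)\<^sup>2) - 2 * c * sum f UNIV + CARD('y) * c\<^sup>2"
proof -
  have "(\<Sum>y\<in>UNIV. (f y - c)\<^sup>2) = (\<Sum>y\<in>UNIV. (f y)\<^sup>2 - 2 * c * f y + c\<^sup>2)"
    by (simp add: power2_eq_square algebra_simps)
  then show ?thesis by (simp add: sum.distrib sum_subtractf sum_distrib_left)
qed

lemma binning_second_moment:
  fixes Fb :: "'b set" and Fc :: "'c set" and D :: "('b \<times> 'c) set" and g :: "'b \<times> 'c \<Rightarrow> real"
    and r Q :: real
  defines "\<Phi> \<equiv> binnings Fb Fc :: (('b \<Rightarrow> 'u::finite) \<times> ('c \<Rightarrow> 'v::finite)) set"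
    and "N \<equiv> real CARD('u) * real CARD('v)"
  assumes fin: "finite Fb" "finite Fc" and D: "D \<subseteq> Fb \<times> Fc"
    and g: "\<And>z. z \<in> D \<Longrightarrow> g z \<ge> 0"
    and atom: "\<And>z. z \<in> D \<Longrightarrow> g z \<le> Q / (r * N)"
    and fibre1: "\<And>z. z \<in> D \<Longrightarrow> sum g {z' \<in> D. fst z' = fst z} \<le> Q / (r * CARD('u))"
    and fibre2: "\<And>z. z \<in> D \<Longrightarrow> sum g {z' \<in> D. snd z' = snd z} \<le> Q / (r * CARD('v))"
  shows "(\<Sum>\<phi>\<in>\<Phi>. \<Sum>y\<in>UNIV. (image_mass (map_prod (fst \<phi>) (snd \<phi>)) D g y - Q / N)\<^sup>2)
    \<le> card \<Phi> / N * (3 * sum g D * Q / r + (Q - sum g D)\<^sup>2)"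
proof -
  define a where "a \<phi> = image_mass (map_prod (fst \<phi>) (snd \<phi>)) D g" for \<phi> :: "('b \<Rightarrow> 'u) \<times> ('c \<Rightarrow> 'v)"
  define m where "m = sum g D"
  define K :: real where "K = card \<Phi>"
  have finD: "finite D" using D fin finite_subset by blast
  have N: "N > 0" by (simp add: N_def)
  have card_UNIV_Times: "CARD('u \<times> 'v) = CARD('u) * CARD('v)"
    by (simp add: card_cartesian_product flip: UNIV_Times_UNIV)
  have "(\<Sum>\<phi>\<in>\<Phi>. \<Sum>y\<in>UNIV. (a \<phi> y)\<^sup>2)
      = K * (\<Sum>z\<in>D. g z * (\<Sum>z'\<in>D. g z' * collision_prob CARD('u) CARD('v) z z'))"
    unfolding a_def K_def \<Phi>_def using fin D by (rule sum_binnings_image_mass_squared)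
  also have "\<dots> \<le> K * (\<Sum>z\<in>D. g z * (3 * Q / (r * N) + m / N))"
    unfolding m_def N_def
    by (intro mult_left_mono sum_mono sum_collision_prob_le finD g atom[unfolded N_def] fibre1 fibre2)
      (auto simp: K_def)
  finally have second: "(\<Sum>\<phi>\<in>\<Phi>. \<Sum>y\<in>UNIV. (a \<phi> y)\<^sup>2) \<le> K * (m * (3 * Q / (r * N) + m / N))"
    by (simp add: m_def sum_distrib_right)
  have dev: "(\<Sum>y\<in>UNIV. (a \<phi> y - Q / N)\<^sup>2)
      = (\<Sum>y\<in>UNIV. (a \<phi> y)\<^sup>2) - 2 * (Q / N) * m + N * (Q / N)\<^sup>2" for \<phi>
    using sum_square_diff_const[of "a \<phi>" "Q / N"]
    by (simp add: a_def sum_image_mass card_UNIV_Times m_def N_def)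
  have "(\<Sum>\<phi>\<in>\<Phi>. \<Sum>y\<in>UNIV. (a \<phi> y - Q / N)\<^sup>2)
      = (\<Sum>\<phi>\<in>\<Phi>. \<Sum>y\<in>UNIV. (a \<phi> y)\<^sup>2) - K * (2 * (Q / N) * m - N * (Q / N)\<^sup>2)"
    unfolding dev by (simp add: sum_subtractf sum.distrib K_def algebra_simps)
  with second have "(\<Sum>\<phi>\<in>\<Phi>. \<Sum>y\<in>UNIV. (a \<phi> y - Q / N)\<^sup>2)
      \<le> K * (m * (3 * Q / (r * N) + m / N)) - K * (2 * (Q / N) * m - N * (Q / N)\<^sup>2)"
    by simp
  also have "\<dots> = K / N * (3 * m * Q / r + (Q - m)\<^sup>2)"
    using N by (simp add: field_simps power2_eq_square)
  finally show ?thesis unfolding a_def K_def m_def .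
qed

lemma sum_abs_le_sqrt_card_mult_sum_square:
  fixes f :: "'a \<Rightarrow> real"
  shows "(\<Sum>x\<in>S. \<bar>f x\<bar>) \<le> sqrt (card S * (\<Sum>x\<in>S. (f x)\<^sup>2))"
proof -
  have "(\<Sum>x\<in>S. \<bar>f x\<bar> * 1)\<^sup>2 \<le> (\<Sum>x\<in>S. \<bar>f x\<bar>\<^sup>2) * (\<Sum>x\<in>S. 1\<^sup>2)"
    by (rule Cauchy_Schwarz_ineq_sum)
  then show ?thesis by (intro real_le_rsqrt) (simp add: mult.commute)
qed

lemma binning_L1_average:
  fixes Fb :: "'b set" and Fc :: "'c set" and D :: "('b \<times> 'c) set" and g :: "'b \<times> 'c \<Rightarrow> real"
    and r Q :: real
  defines "\<Phi> \<equiv> binnings Fb Fc :: (('b \<Rightarrow> 'u::finite) \<times> ('c \<Rightarrow> 'v::finite)) set"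
    and "N \<equiv> real CARD('u) * real CARD('v)"
  assumes fin: "finite Fb" "finite Fc" and D: "D \<subseteq> Fb \<times> Fc"
    and g: "\<And>z. z \<in> D \<Longrightarrow> g z \<ge> 0" and r: "r > 0" and mass: "sum g D \<le> Q"
    and atom: "\<And>z. z \<in> D \<Longrightarrow> g z \<le> Q / (r * N)"
    and fibre1: "\<And>z. z \<in> D \<Longrightarrow> sum g {z' \<in> D. fst z' = fst z} \<le> Q / (r * CARD('u))"
    and fibre2: "\<And>z. z \<in> D \<Longrightarrow> sum g {z' \<in> D. snd z' = snd z} \<le> Q / (r * CARD('v))"
  shows "(\<Sum>\<phi>\<in>\<Phi>. \<Sum>y\<in>UNIV. \<bar>image_mass (map_prod (fst \<phi>) (snd \<phi>)) D g y - Q / N\<bar>)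
    \<le> card \<Phi> * (sqrt (3 * sum g D * Q / r) + (Q - sum g D))"
proof -
  define h where "h w = image_mass (map_prod (fst (fst w)) (snd (fst w))) D g (snd w) - Q / N"
    for w :: "(('b \<Rightarrow> 'u) \<times> ('c \<Rightarrow> 'v)) \<times> 'u \<times> 'v"
  define K :: real where "K = card \<Phi>"
  define m where "m = sum g D"
  have m: "m \<ge> 0" using g by (simp add: m_def sum_nonneg)
  have card: "card (\<Phi> \<times> (UNIV :: ('u \<times> 'v) set)) = K * N"
    by (simp add: card_cartesian_product K_def N_def flip: UNIV_Times_UNIV)
  have "(\<Sum>\<phi>\<in>\<Phi>. \<Sum>y\<in>UNIV. \<bar>image_mass (map_prod (fst \<phi>) (snd \<phi>)) D g y - Q / N\<bar>)
      = (\<Sum>w\<in>\<Phi> \<times> UNIV. \<bar>h w\<bar>)"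
    by (simp add: h_def sum.cartesian_product split_beta)
  also have "\<dots> \<le> sqrt (K * N * (\<Sum>w\<in>\<Phi> \<times> UNIV. (h w)\<^sup>2))"
    using sum_abs_le_sqrt_card_mult_sum_square[of h "\<Phi> \<times> UNIV"] card by simp
  also have "\<dots> \<le> sqrt (K * N * (K / N * (3 * m * Q / r + (Q - m)\<^sup>2)))"
    using binning_second_moment[OF fin D g atom[unfolded N_def] fibre1 fibre2]
    by (intro real_sqrt_le_mono mult_left_mono)
      (simp_all add: h_def sum.cartesian_product split_beta K_def m_def \<Phi>_def N_def)
  also have "\<dots> = sqrt (K\<^sup>2 * (3 * m * Q / r + (Q - m)\<^sup>2))"
    by (simp add: N_def power2_eq_square)
  also have "\<dots> = K * sqrt (3 * m * Q / r + (Q - m)\<^sup>2)"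
    by (simp add: real_sqrt_mult K_def)
  also have "\<dots> \<le> K * (sqrt (3 * m * Q / r) + (Q - m))"
  proof (rule mult_left_mono)
    have "sqrt (3 * m * Q / r + (Q - m)\<^sup>2) \<le> sqrt (3 * m * Q / r) + sqrt ((Q - m)\<^sup>2)"
      using m mass r by (intro sqrt_add_le_add_sqrt) (auto simp: m_def)
    then show "sqrt (3 * m * Q / r + (Q - m)\<^sup>2) \<le> sqrt (3 * m * Q / r) + (Q - m)"
      using mass by (simp add: m_def)
  qed (simp add: K_def)
  finally show ?thesis unfolding K_def m_def .
qed

lemma exists_le_average:
  fixes f :: "'a \<Rightarrow> real" and B :: real
  assumes "finite S" "S \<noteq> {}" "(\<Sum>s\<in>S. f s) \<le> card S * B"
  shows "\<exists>s\<in>S. f s \<le> B"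
proof (rule ccontr)
  assume "\<not> ?thesis"
  then have "(\<Sum>s\<in>S. B) < (\<Sum>s\<in>S. f s)" using assms by (intro sum_strict_mono) auto
  with assms show False by simp
qed

lemma le_divide_of_mult_less:
  fixes a b t Q :: real
  assumes "a \<le> b" "t * b < Q" "t > 0"
  shows "a \<le> Q / t"
  using assms by (simp add: pos_le_divide_eq mult.commute[of a]) (meson less_le_not_le mult_left_mono order_trans)

lemma sum_section_le_of_in_Aset:
  fixes p :: "('a \<times> 'b \<times> 'c) pmf" and x :: 'a and n1 n2 :: nat
  defines "Q \<equiv> pmf (map_pmf fst p) x"
  assumes xyz: "(x, y, z) \<in> set_pmf p" and r: "r > 0" and n: "n1 > 0" "n2 > 0" and S: "finite S"
    and T: "(TX1 p (x, y, z), TX2 p (x, y, z), TX3 p (x, y, z)) \<in> Aset n1 n2 r"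
  shows "pmf p (x, y, z) \<le> Q / (r * (n1 * n2))"
    and "(\<Sum>w\<in>{w \<in> S. fst w = y}. pmf p (x, w)) \<le> Q / (r * n1)"
    and "(\<Sum>w\<in>{w \<in> S. snd w = z}. pmf p (x, w)) \<le> Q / (r * n2)"
proof -
  have bounds: "r * n1 * pmf (law01 p) (x, y) < Q" "r * n2 * pmf (law02 p) (x, z) < Q"
    "r * n1 * n2 * pmf p (x, y, z) < Q"
    using TX_in_Aset_iff[OF xyz r, of n1 n2] T by (auto simp: Q_def)
  show "pmf p (x, y, z) \<le> Q / (r * (n1 * n2))"
    using n bounds(3) r by (intro le_divide_of_mult_less) (auto simp: mult.assoc)
  have "(\<Sum>w\<in>{w \<in> S. fst w = y}. pmf p (x, w)) \<le> pmf (law01 p) (x, y)"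
    unfolding law01_def by (rule sum_pmf_Pair_le_pmf_map) (auto simp: S)
  then show "(\<Sum>w\<in>{w \<in> S. fst w = y}. pmf p (x, w)) \<le> Q / (r * n1)"
    using n bounds(1) r by (intro le_divide_of_mult_less) auto
  have "(\<Sum>w\<in>{w \<in> S. snd w = z}. pmf p (x, w)) \<le> pmf (law02 p) (x, z)"
    unfolding law02_def by (rule sum_pmf_Pair_le_pmf_map) (auto simp: S)
  then show "(\<Sum>w\<in>{w \<in> S. snd w = z}. pmf p (x, w)) \<le> Q / (r * n2)"
    using n bounds(2) r by (intro le_divide_of_mult_less) auto
qed

lemma exists_binning_L1_le:
  fixes p :: "('a \<times> 'b \<times> 'c) pmf" and G :: "('a \<times> 'b \<times> 'c) set"
  defines "N \<equiv> real CARD('y1::finite) * real CARD('y2::finite)"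
    and "Q \<equiv> pmf (map_pmf fst p)"
    and "m \<equiv> \<lambda>x0. \<Sum>w\<in>{w. (x0, w) \<in> G}. pmf p (x0, w)"
  assumes G: "finite G" "G \<subseteq> set_pmf p" and r: "r > 0"
    and good: "\<And>x. x \<in> G \<Longrightarrow> (TX1 p x, TX2 p x, TX3 p x) \<in> Aset CARD('y1) CARD('y2) r"
  shows "\<exists>(\<phi>1 :: 'b \<Rightarrow> 'y1) (\<phi>2 :: 'c \<Rightarrow> 'y2).
    (\<Sum>x0\<in>fst ` G. \<Sum>y\<in>UNIV.
        \<bar>image_mass (map_prod \<phi>1 \<phi>2) {w. (x0, w) \<in> G} (\<lambda>w. pmf p (x0, w)) y - Q x0 / N\<bar>)
      \<le> (\<Sum>x0\<in>fst ` G. sqrt (3 * m x0 * Q x0 / r) + (Q x0 - m x0))"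
proof -
  define Fb where "Fb = fst ` snd ` G"
  define Fc where "Fc = snd ` snd ` G"
  define \<Phi> where "\<Phi> = (binnings Fb Fc :: (('b \<Rightarrow> 'y1) \<times> ('c \<Rightarrow> 'y2)) set)"
  define L where "L \<phi> x0 = (\<Sum>y\<in>UNIV.
      \<bar>image_mass (map_prod (fst \<phi>) (snd \<phi>)) {w. (x0, w) \<in> G} (\<lambda>w. pmf p (x0, w)) y - Q x0 / N\<bar>)"
    for \<phi> :: "('b \<Rightarrow> 'y1) \<times> ('c \<Rightarrow> 'y2)" and x0
  have fin: "finite Fb" "finite Fc" "finite {w. (x0, w) \<in> G}" for x0
    using G finite_vimageI[of G "Pair x0"] by (auto simp: Fb_def Fc_def vimage_def inj_on_def)
  have "(\<Sum>\<phi>\<in>\<Phi>. L \<phi> x0) \<le> card \<Phi> * (sqrt (3 * m x0 * Q x0 / r) + (Q x0 - m x0))" for x0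
    unfolding L_def \<Phi>_def m_def N_def
  proof (rule binning_L1_average)
    show "{w. (x0, w) \<in> G} \<subseteq> Fb \<times> Fc" by (force simp: Fb_def Fc_def)
    show "(\<Sum>w\<in>{w. (x0, w) \<in> G}. pmf p (x0, w)) \<le> Q x0"
      unfolding Q_def by (rule sum_pmf_Pair_le_pmf_map) (use fin in auto)
    fix w assume w: "w \<in> {w. (x0, w) \<in> G}"
    obtain x1 x2 where w_eq: "w = (x1, x2)" by (cases w)
    with w G good[of "(x0, x1, x2)"] have x: "(x0, x1, x2) \<in> set_pmf p"
      and T: "(TX1 p (x0, x1, x2), TX2 p (x0, x1, x2), TX3 p (x0, x1, x2)) \<in> Aset CARD('y1) CARD('y2) r"
      by auto
    from sum_section_le_of_in_Aset[OF x r _ _ fin(3) T]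
    show "pmf p (x0, w) \<le> Q x0 / (r * (real CARD('y1) * real CARD('y2)))"
      "(\<Sum>w'\<in>{w' \<in> {w. (x0, w) \<in> G}. fst w' = fst w}. pmf p (x0, w')) \<le> Q x0 / (r * CARD('y1))"
      "(\<Sum>w'\<in>{w' \<in> {w. (x0, w) \<in> G}. snd w' = snd w}. pmf p (x0, w')) \<le> Q x0 / (r * CARD('y2))"
      by (simp_all add: w_eq Q_def)
  qed (use fin r in auto)
  then have "(\<Sum>\<phi>\<in>\<Phi>. \<Sum>x0\<in>fst ` G. L \<phi> x0)
      \<le> card \<Phi> * (\<Sum>x0\<in>fst ` G. sqrt (3 * m x0 * Q x0 / r) + (Q x0 - m x0))"
    by (subst sum.swap) (simp add: sum_distrib_left sum_mono)
  moreover have "finite \<Phi>" "\<Phi> \<noteq> {}"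
    using fin by (simp_all add: \<Phi>_def finite_binnings binnings_nonempty)
  ultimately obtain \<phi> where "(\<Sum>x0\<in>fst ` G. L \<phi> x0) \<le> (\<Sum>x0\<in>fst ` G. sqrt (3 * m x0 * Q x0 / r) + (Q x0 - m x0))"
    using exists_le_average[where S = \<Phi> and f = "\<lambda>\<phi>. \<Sum>x0\<in>fst ` G. L \<phi> x0"] by blast
  then show ?thesis unfolding L_def by blast
qed

lemma prob_diff_le_half_L1:
  fixes \<mu> \<nu> :: "'z pmf"
  assumes S: "finite S"
    and \<mu>: "measure \<mu> C \<le> (\<Sum>z\<in>S \<inter> C. a z) + \<delta>"
    and \<nu>: "\<And>z. z \<in> S \<Longrightarrow> pmf \<nu> z = c z"
  shows "measure \<mu> C - measure \<nu> C \<le> \<delta> + ((\<Sum>z\<in>S. \<bar>a z - c z\<bar>) + (\<Sum>z\<in>S. a z - c z)) / 2"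
proof -
  have "(\<Sum>z\<in>S \<inter> C. c z) = measure \<nu> (S \<inter> C)"
    using S \<nu> by (simp add: measure_measure_pmf_finite)
  also have "\<dots> \<le> measure \<nu> C" by (rule measure_pmf.finite_measure_mono) auto
  finally have "measure \<mu> C - measure \<nu> C \<le> \<delta> + (\<Sum>z\<in>S \<inter> C. a z - c z)"
    using \<mu> by (simp add: sum_subtractf)
  also have "(\<Sum>z\<in>S \<inter> C. a z - c z) \<le> (\<Sum>z\<in>S \<inter> C. (\<bar>a z - c z\<bar> + (a z - c z)) / 2)"
    by (intro sum_mono) auto
  also have "\<dots> \<le> (\<Sum>z\<in>S. (\<bar>a z - c z\<bar> + (a z - c z)) / 2)"
    by (rule sum_mono2) (use S in auto)
  also have "\<dots> = ((\<Sum>z\<in>S. \<bar>a z - c z\<bar>) + (\<Sum>z\<in>S. a z - c z)) / 2"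
    by (simp add: sum.distrib flip: sum_divide_distrib)
  finally show ?thesis by simp
qed

lemma measure_map_prod_le_fibres:
  fixes p :: "('a \<times> 'x) pmf" and \<psi> :: "'x \<Rightarrow> 'y::finite"
  assumes fin: "finite F" "\<And>x0. finite (D x0)"
  shows "measure (map_pmf (map_prod id \<psi>) p) C
    \<le> (\<Sum>z\<in>(F \<times> UNIV) \<inter> C. image_mass \<psi> (D (fst z)) (\<lambda>w. pmf p (fst z, w)) (snd z))
      + measure p (- Sigma F D)"
proof -
  let ?G = "Sigma F D" and ?f = "map_prod id \<psi>"
  have "measure p (?f -` C) \<le> measure p (?f -` C \<inter> ?G) + measure p (- ?G)"
    by (rule order_trans[OF _ measure_Un_le]) (auto intro: measure_pmf.finite_measure_mono)
  also have "?f -` C \<inter> ?G = (SIGMA x0:F. {w \<in> D x0. (x0, \<psi> w) \<in> C})" by auto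
  also have "measure p \<dots> = (\<Sum>x0\<in>F. \<Sum>w\<in>D x0. of_bool ((x0, \<psi> w) \<in> C) * pmf p (x0, w))"
    using fin by (simp add: measure_measure_pmf_finite sum.Sigma Int_def conj_commute)
  also have "\<dots> = (\<Sum>x0\<in>F. \<Sum>y\<in>UNIV. of_bool ((x0, y) \<in> C) * image_mass \<psi> (D x0) (\<lambda>w. pmf p (x0, w)) y)"
  proof (intro sum.cong refl)
    fix x0
    have "(\<Sum>y\<in>UNIV. of_bool ((x0, y) \<in> C) * (if \<psi> w = y then pmf p (x0, w) else 0))
        = of_bool ((x0, \<psi> w) \<in> C) * pmf p (x0, w)" for w
    proof -
      have "(\<lambda>y. of_bool ((x0, y) \<in> C) * (if \<psi> w = y then pmf p (x0, w) else 0))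
          = (\<lambda>y. if \<psi> w = y then of_bool ((x0, \<psi> w) \<in> C) * pmf p (x0, w) else 0)"
        by auto
      then show ?thesis by simp
    qed
    then show "(\<Sum>w\<in>D x0. of_bool ((x0, \<psi> w) \<in> C) * pmf p (x0, w))
        = (\<Sum>y\<in>UNIV. of_bool ((x0, y) \<in> C) * image_mass \<psi> (D x0) (\<lambda>w. pmf p (x0, w)) y)"
      unfolding image_mass_def sum_distrib_left by (subst sum.swap) simp
  qed
  also have "\<dots> = (\<Sum>z\<in>(F \<times> UNIV) \<inter> C. image_mass \<psi> (D (fst z)) (\<lambda>w. pmf p (fst z, w)) (snd z))"
  proof -
    have "(\<Sum>x0\<in>F. \<Sum>y\<in>UNIV. of_bool ((x0, y) \<in> C) * image_mass \<psi> (D x0) (\<lambda>w. pmf p (x0, w)) y)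
        = (\<Sum>z\<in>F \<times> UNIV. of_bool (z \<in> C) * image_mass \<psi> (D (fst z)) (\<lambda>w. pmf p (fst z, w)) (snd z))"
      unfolding sum.cartesian_product by (rule sum.cong) auto
    also have "\<dots> = (\<Sum>z\<in>(F \<times> UNIV) \<inter> C. image_mass \<psi> (D (fst z)) (\<lambda>w. pmf p (fst z, w)) (snd z))"
      using fin by simp
    finally show ?thesis .
  qed
  finally show ?thesis by (simp add: id_def)
qed

lemma sum_sqrt_mult_le:
  fixes m Q :: "'a \<Rightarrow> real"
  assumes mQ: "\<And>x. x \<in> S \<Longrightarrow> 0 \<le> m x \<and> m x \<le> Q x" and Q: "sum Q S \<le> 1" and c: "c \<ge> 0"
  shows "(\<Sum>x\<in>S. sqrt (c * m x * Q x)) \<le> sqrt c"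
proof -
  have "sqrt (c * m x * Q x) \<le> Q x * sqrt c" if x: "x \<in> S" for x
  proof -
    have "c * m x * Q x \<le> (Q x)\<^sup>2 * c"
      using mQ[OF x] c by (simp add: power2_eq_square mult_ac mult_left_mono mult_right_mono)
    then have "sqrt (c * m x * Q x) \<le> sqrt ((Q x)\<^sup>2 * c)" by (rule real_sqrt_le_mono)
    also have "\<dots> = Q x * sqrt c" unfolding real_sqrt_mult using mQ[OF x] by simp
    finally show ?thesis .
  qed
  then have "(\<Sum>x\<in>S. sqrt (c * m x * Q x)) \<le> sum Q S * sqrt c"
    by (simp add: sum_mono sum_distrib_right)
  also have "\<dots> \<le> sqrt c" using mult_right_mono[OF Q, of "sqrt c"] c by simp
  finally show ?thesis .
qed

lemma dXphi_le_binned_L1: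
  fixes p :: "('a \<times> 'b \<times> 'c) pmf" and G :: "('a \<times> 'b \<times> 'c) set"
    and \<phi>1 :: "'b \<Rightarrow> 'y1::finite" and \<phi>2 :: "'c \<Rightarrow> 'y2::finite"
  defines "N \<equiv> real CARD('y1) * real CARD('y2)"
    and "Q \<equiv> pmf (map_pmf fst p)"
    and "a \<equiv> \<lambda>x0. image_mass (map_prod \<phi>1 \<phi>2) {w. (x0, w) \<in> G} (\<lambda>w. pmf p (x0, w))"
  assumes G: "finite G"
  shows "dXphi p \<phi>1 \<phi>2 \<le> measure p (- G)
    + ((\<Sum>x0\<in>fst ` G. \<Sum>y\<in>UNIV. \<bar>a x0 y - Q x0 / N\<bar>) + (\<Sum>x0\<in>fst ` G. sum (a x0) UNIV - Q x0)) / 2"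
proof -
  define \<nu> where "\<nu> = pair_pmf (map_pmf fst p) (pmf_of_set (UNIV :: ('y1 \<times> 'y2) set))"
  define D where "D x0 = {w. (x0, w) \<in> G}" for x0
  have fin: "finite (fst ` G)" "finite (D x0)" for x0
    using G finite_vimageI[of G "Pair x0"] by (auto simp: D_def vimage_def inj_on_def)
  have card_UNIV_Times: "CARD('y1 \<times> 'y2) = CARD('y1) * CARD('y2)"
    by (simp add: card_cartesian_product flip: UNIV_Times_UNIV)
  have sums: "(\<Sum>z\<in>fst ` G \<times> UNIV. f (fst z) (snd z)) = (\<Sum>x0\<in>fst ` G. \<Sum>y\<in>UNIV. f x0 y)" for f
    unfolding sum.cartesian_product by (rule sum.cong) auto
  have "Sigma (fst ` G) D = G" by (force simp: D_def)
  then have "measure (map_pmf (map_prod id (map_prod \<phi>1 \<phi>2)) p) C - measure \<nu> C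
      \<le> measure p (- G) + ((\<Sum>z\<in>fst ` G \<times> UNIV. \<bar>a (fst z) (snd z) - Q (fst z) / N\<bar>)
        + (\<Sum>z\<in>fst ` G \<times> UNIV. a (fst z) (snd z) - Q (fst z) / N)) / 2" for C
    using measure_map_prod_le_fibres[where F = "fst ` G" and D = D and p = p and \<psi> = "map_prod \<phi>1 \<phi>2"] fin
    by (intro prob_diff_le_half_L1) (auto simp: a_def D_def \<nu>_def pmf_pair Q_def N_def)
  moreover have "(\<Sum>y\<in>UNIV. a x0 y - Q x0 / N) = sum (a x0) UNIV - Q x0" for x0
    by (simp add: sum_subtractf N_def card_UNIV_Times)
  ultimately have "measure (map_pmf (map_prod id (map_prod \<phi>1 \<phi>2)) p) C - measure \<nu> C
      \<le> measure p (- G) + ((\<Sum>x0\<in>fst ` G. \<Sum>y\<in>UNIV. \<bar>a x0 y - Q x0 / N\<bar>)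
        + (\<Sum>x0\<in>fst ` G. sum (a x0) UNIV - Q x0)) / 2" for C
    using sums[of "\<lambda>x0 y. \<bar>a x0 y - Q x0 / N\<bar>"] sums[of "\<lambda>x0 y. a x0 y - Q x0 / N"] by simp
  then show ?thesis
    unfolding dXphi_def pair_pmf_of_set_UNIV \<nu>_def[symmetric]
    by (intro stat_dist_le) (simp add: map_prod_def split_beta' id_def)
qed

lemma exists_dXphi_le_of_good_finite:
  fixes p :: "('a \<times> 'b \<times> 'c) pmf"
  assumes G: "finite G" "G \<subseteq> set_pmf p" and r: "r > 0"
    and good: "\<And>x. x \<in> G \<Longrightarrow> (TX1 p x, TX2 p x, TX3 p x) \<in> Aset CARD('y1) CARD('y2) r"
  shows "\<exists>(\<phi>1 :: 'b \<Rightarrow> 'y1::finite) (\<phi>2 :: 'c \<Rightarrow> 'y2::finite).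
    dXphi p \<phi>1 \<phi>2 \<le> measure p (- G) + sqrt (3 / r) / 2"
proof -
  define Q where "Q = pmf (map_pmf fst p)"
  define m where "m x0 = (\<Sum>w\<in>{w. (x0, w) \<in> G}. pmf p (x0, w))" for x0
  obtain \<phi>1 :: "'b \<Rightarrow> 'y1" and \<phi>2 :: "'c \<Rightarrow> 'y2" where \<phi>:
    "(\<Sum>x0\<in>fst ` G. \<Sum>y\<in>UNIV. \<bar>image_mass (map_prod \<phi>1 \<phi>2) {w. (x0, w) \<in> G} (\<lambda>w. pmf p (x0, w)) y
        - Q x0 / (real CARD('y1) * real CARD('y2))\<bar>)
      \<le> (\<Sum>x0\<in>fst ` G. sqrt (3 * m x0 * Q x0 / r) + (Q x0 - m x0))"
    using exists_binning_L1_le[OF G r good] unfolding Q_def m_def by blast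
  have fin: "finite (fst ` G)" "finite {w. (x0, w) \<in> G}" for x0
    using G finite_vimageI[of G "Pair x0"] by (auto simp: vimage_def inj_on_def)
  have m: "0 \<le> m x0 \<and> m x0 \<le> Q x0" for x0
    unfolding m_def Q_def using fin by (auto intro: sum_nonneg sum_pmf_Pair_le_pmf_map)
  have "(\<Sum>x0\<in>fst ` G. Q x0) = measure (map_pmf fst p) (fst ` G)"
    unfolding Q_def using fin(1) by (rule measure_measure_pmf_finite[symmetric])
  then have sqrt_sum: "(\<Sum>x0\<in>fst ` G. sqrt (3 / r * m x0 * Q x0)) \<le> sqrt (3 / r)"
    using m r by (intro sum_sqrt_mult_le) auto
  define a where "a x0 = image_mass (map_prod \<phi>1 \<phi>2) {w. (x0, w) \<in> G} (\<lambda>w. pmf p (x0, w))" for x0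
  have "dXphi p \<phi>1 \<phi>2 \<le> measure p (- G) + ((\<Sum>x0\<in>fst ` G. \<Sum>y\<in>UNIV.
      \<bar>a x0 y - Q x0 / (real CARD('y1) * real CARD('y2))\<bar>) + (\<Sum>x0\<in>fst ` G. sum (a x0) UNIV - Q x0)) / 2"
    using dXphi_le_binned_L1[OF G(1), of p \<phi>1 \<phi>2] unfolding Q_def a_def .
  also have "(\<Sum>x0\<in>fst ` G. sum (a x0) UNIV - Q x0) = (\<Sum>x0\<in>fst ` G. m x0 - Q x0)"
    by (simp add: sum_image_mass a_def m_def)
  also have "(\<Sum>x0\<in>fst ` G. \<Sum>y\<in>UNIV. \<bar>a x0 y - Q x0 / (real CARD('y1) * real CARD('y2))\<bar>)
      \<le> (\<Sum>x0\<in>fst ` G. sqrt (3 * m x0 * Q x0 / r) + (Q x0 - m x0))"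
    using \<phi> unfolding a_def .
  also have "(\<Sum>x0\<in>fst ` G. sqrt (3 * m x0 * Q x0 / r) + (Q x0 - m x0)) + (\<Sum>x0\<in>fst ` G. m x0 - Q x0)
      = (\<Sum>x0\<in>fst ` G. sqrt (3 / r * m x0 * Q x0))"
    by (simp add: mult_ac flip: sum.distrib)
  finally have "dXphi p \<phi>1 \<phi>2 \<le> measure p (- G) + sqrt (3 / r) / 2"
    using sqrt_sum by simp
  then show ?thesis by blast
qed

lemma countable_pmf_finite_tail:
  fixes p :: "'x::countable pmf"
  assumes "\<epsilon> > 0"
  shows "\<exists>F. finite F \<and> measure p (- F) < \<epsilon>"
proof -
  define A where "A n = {x :: 'x. to_nat x < n}" for n
  have "(\<lambda>n. measure p (A n)) \<longlonglongrightarrow> measure p (\<Union>n. A n)"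
    by (rule measure_pmf.finite_Lim_measure_incseq) (auto simp: incseq_def A_def)
  moreover have "(\<Union>n. A n) = UNIV" by (auto simp: A_def)
  ultimately have "(\<lambda>n. measure p (A n)) \<longlonglongrightarrow> 1" by simp
  then have "eventually (\<lambda>n. measure p (A n) > 1 - \<epsilon>) sequentially"
    using assms by (intro order_tendstoD(1)) auto
  then obtain n where "measure p (A n) > 1 - \<epsilon>" by (auto simp: eventually_sequentially)
  moreover have "measure p (- A n) = 1 - measure p (A n)"
    using measure_pmf.prob_compl[of "A n" p] by (simp add: Compl_eq_Diff_UNIV)
  moreover have "finite (A n)"
    unfolding A_def using finite_vimageI[of "{..<n}" to_nat] by (simp add: vimage_def)
  ultimately show ?thesis by (intro exI[of _ "A n"]) auto
qed

lemma exists_dXphi_le_prob_not_in_Aset: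
  fixes p :: "('a::countable \<times> 'b::countable \<times> 'c::countable) pmf"
  assumes r: "r > 0" and \<epsilon>: "\<epsilon> > 0"
  shows "\<exists>(\<phi>1 :: 'b \<Rightarrow> 'y1::finite) (\<phi>2 :: 'c \<Rightarrow> 'y2::finite).
    dXphi p \<phi>1 \<phi>2 \<le> measure_pmf.prob p {x. (TX1 p x, TX2 p x, TX3 p x) \<notin> Aset CARD('y1) CARD('y2) r}
      + sqrt 3 / 2 * r powr (-1/2) + \<epsilon>"
proof -
  define A where "A = {x. (TX1 p x, TX2 p x, TX3 p x) \<notin> Aset CARD('y1) CARD('y2) r}"
  obtain F where F: "finite F" "measure p (- F) < \<epsilon>"
    using countable_pmf_finite_tail[OF \<epsilon>] by blast
  define G where "G = {x \<in> F. x \<in> set_pmf p \<and> x \<notin> A}"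
  have "measure p (- G) \<le> measure p (- F \<union> A)"
    by (intro measure_pmf.finite_measure_mono_AE) (auto simp: AE_measure_pmf_iff G_def)
  also have "\<dots> \<le> measure p (- F) + measure p A" by (rule measure_Un_le) auto
  finally have tail: "measure p (- G) \<le> measure p A + \<epsilon>" using F by simp
  obtain \<phi>1 :: "'b \<Rightarrow> 'y1" and \<phi>2 :: "'c \<Rightarrow> 'y2"
    where \<phi>: "dXphi p \<phi>1 \<phi>2 \<le> measure p (- G) + sqrt (3 / r) / 2"
    using exists_dXphi_le_of_good_finite[of G p r] F r by (auto simp: G_def A_def)
  have "sqrt (3 / r) / 2 = sqrt 3 / 2 * r powr (-1/2)"
    using r by (simp add: powr_minus_divide powr_half_sqrt real_sqrt_divide)
  with \<phi> tail have "dXphi p \<phi>1 \<phi>2 \<le> measure p A + sqrt 3 / 2 * r powr (-1/2) + \<epsilon>" by linarith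
  then show ?thesis unfolding A_def by blast
qed

theorem theorem6:
  fixes p :: "('a::countable \<times> 'b::countable \<times> 'c::countable) pmf"
  shows "(\<forall>r \<epsilon>. r > 1 \<longrightarrow> \<epsilon> > 0 \<longrightarrow>
            (\<exists>(\<phi>1 :: 'b \<Rightarrow> 'y1::finite) (\<phi>2 :: 'c \<Rightarrow> 'y2::finite).
               dXphi p \<phi>1 \<phi>2
                 \<le> measure_pmf.prob p {x. (TX1 p x, TX2 p x, TX3 p x) \<notin> Aset CARD('y1) CARD('y2) r}
                   + sqrt 3 / 2 * r powr (-1/2) + \<epsilon>))
       \<and> (\<forall>(\<phi>1 :: 'b \<Rightarrow> 'y1) (\<phi>2 :: 'c \<Rightarrow> 'y2) r. 0 < r \<longrightarrow> r < 1 \<longrightarrow>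
            dXphi p \<phi>1 \<phi>2
              \<ge> measure_pmf.prob p {x. (TX1 p x, TX2 p x, TX3 p x) \<notin> Aset CARD('y1) CARD('y2) r}
                - 3 * r)"
proof (intro conjI allI impI)
  \<comment> \<open>Both bounds hold for every r > 0; r > 1 and r < 1 only mark where they are informative.\<close>
  fix r \<epsilon> :: real
  assume "r > 1" "\<epsilon> > 0"
  then show "\<exists>(\<phi>1 :: 'b \<Rightarrow> 'y1) (\<phi>2 :: 'c \<Rightarrow> 'y2).
      dXphi p \<phi>1 \<phi>2
        \<le> measure_pmf.prob p {x. (TX1 p x, TX2 p x, TX3 p x) \<notin> Aset CARD('y1) CARD('y2) r}
          + sqrt 3 / 2 * r powr (-1/2) + \<epsilon>"
    by (intro exists_dXphi_le_prob_not_in_Aset) auto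
next
  fix \<phi>1 :: "'b \<Rightarrow> 'y1" and \<phi>2 :: "'c \<Rightarrow> 'y2" and r :: real
  assume "0 < r"
  then show "dXphi p \<phi>1 \<phi>2
      \<ge> measure_pmf.prob p {x. (TX1 p x, TX2 p x, TX3 p x) \<notin> Aset CARD('y1) CARD('y2) r} - 3 * r"
    by (rule dXphi_ge_prob_not_in_Aset)
qed

end
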